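(* Let $i\ge 3$ and $k\ge 3$ be integers. Then: (a) $g_1(F_i,F_{i+2},F_{i+k})=(2F_i-1)F_{i+2}-F_i$ whenever $k\ge i+2$; (b) $g_1(F_i,F_{i+2},F_{2i+1})=(F_{i-2}-1)F_{i+2}+F_{2i+1}-F_i$; (c) $g_1(F_i,F_{i+2},F_{2i})=(F_i-1)F_{i+2}+F_{2i}-F_i$; (d) if $r=\lfloor (F_i-1)/F_k\rfloor\ge 1$ (equivalently $k\le i-1$), then $$g_1(F_i,F_{i+2},F_{i+k})=\begin{cases}(F_i-rF_k-1)F_{i+2}+(r+1)F_{i+k}-F_i & \text{if } (F_i-rF_k)F_{i+2}\ge F_{k-2}F_i,\\ (F_k-1)F_{i+2}+rF_{i+k}-F_i & \text{if } (F_i-rF_k)F_{i+2}< F_{k-2}F_i.\end{cases}$$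
   Context: Fibonacci numbers: $F_0=0$, $F_1=1$, $F_n=F_{n-1}+F_{n-2}$. For positive integers $a_1,\dots,a_l$ with $\gcd(a_1,\dots,a_l)=1$ and an integer $n$, let $d(n;a_1,\dots,a_l)$ be the number of tuples $(x_1,\dots,x_l)$ of nonnegative integers with $a_1x_1+\dots+a_lx_l=n$. For a nonnegative integer $p$, the $p$-Frobenius number $g_p(a_1,\dots,a_l)$ is the largest integer $n$ with $d(n;a_1,\dots,a_l)\le p$. *)

theory Defs
  imports "HOL-Number_Theory.Fib"
begin

definition num_reps :: "int \<Rightarrow> nat list \<Rightarrow> nat" where
  "num_reps n as = card {xs :: nat list. length xs = length as \<and>
      (\<Sum>j<length as. int (as ! j) * int (xs ! j)) = n}"

definition p_frobenius :: "nat \<Rightarrow> nat list \<Rightarrow> int" where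
  "p_frobenius p as = (GREATEST n :: int. num_reps n as \<le> p)"

end

theory Submission
  imports Defs "HOL-Number_Theory.Cong"
begin

text \<open>
  Let a = F_i and b = F_{i+2}, which are coprime, and c = F_{i+k}. For every n > g to have two
  representations it suffices that each residue class modulo a contains two distinct
  nonnegative combinations b y + c z \<le> g + a: adding a nonnegative multiple of a turns both
  into representations of every n > g in that class. Since b is invertible modulo a, the
  classes are those of b t with 0 \<le> t < a, and the two combinations are obtained by trading
  b's for c's according to how c is expressed through a and b. That g itself has a single
  representation follows by reducing a x + b y + c z = g modulo a: writing c \<equiv> f b (mod a),
  coprimality determines y + f z modulo a, and size bounds leave one possibility. The four
  parts correspond to c > g (k \<ge> i + 2), c = a b + F_{i-1} (b - a) (k = i + 1),
  c = a (b - F_{i-2}) (k = i), and in general c = F_k b - F_{k-2} a.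
\<close>

section \<open>Counting representations\<close>

definition reps3 :: "int \<Rightarrow> int \<Rightarrow> int \<Rightarrow> int \<Rightarrow> (nat \<times> nat \<times> nat) set" where
  "reps3 a b c n = {(x, y, z). a * int x + b * int y + c * int z = n}"

lemma num_reps_eq_card_reps3:
  fixes a b c :: int
  assumes "a \<ge> 0" "b \<ge> 0" "c \<ge> 0"
  shows "num_reps n [nat a, nat b, nat c] = card (reps3 a b c n)"
proof -
  let ?as = "[nat a, nat b, nat c]"
  let ?list = "\<lambda>(x, y, z). [x, y, z :: nat]"
  have sum3: "(\<Sum>j<length ?as. int (?as ! j) * int (xs ! j))
      = a * int (xs ! 0) + b * int (xs ! 1) + c * int (xs ! 2)" for xs :: "nat list"
    using assms by (simp add: numeral_3_eq_3 numeral_2_eq_2 lessThan_Suc)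
  let ?L = "{xs. length xs = length ?as \<and> (\<Sum>j<length ?as. int (?as ! j) * int (xs ! j)) = n}"
  have set_eq: "?L = ?list ` reps3 a b c n"
  proof (intro equalityI subsetI)
    fix xs
    assume xs: "xs \<in> ?L"
    then obtain x y z where "xs = [x, y, z]"
      by (auto simp: numeral_3_eq_3 length_Suc_conv)
    moreover have "(x, y, z) \<in> reps3 a b c n"
      using xs sum3[of xs] unfolding reps3_def \<open>xs = [x, y, z]\<close> by simp
    ultimately show "xs \<in> ?list ` reps3 a b c n"
      by (simp add: rev_image_eqI)
  next
    fix xs assume "xs \<in> ?list ` reps3 a b c n"
    then obtain x y z where "xs = [x, y, z]" "(x, y, z) \<in> reps3 a b c n"
      by auto
    then show "xs \<in> ?L"
      unfolding mem_Collect_eq sum3 by (simp add: reps3_def)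
  qed
  have "inj_on ?list (reps3 a b c n)"
    by (auto simp: inj_on_def)
  then show ?thesis
    unfolding num_reps_def set_eq by (rule card_image)
qed

lemma finite_reps3:
  fixes a b c :: int
  assumes "a > 0" "b > 0" "c > 0"
  shows "finite (reps3 a b c n)"
proof (rule finite_subset)
  show "reps3 a b c n \<subseteq> {..nat n} \<times> {..nat n} \<times> {..nat n}"
  proof
    fix t assume "t \<in> reps3 a b c n"
    then obtain x y z where t: "t = (x, y, z)" and "a * int x + b * int y + c * int z = n"
      by (auto simp: reps3_def)
    moreover have "int x \<le> a * int x" "int y \<le> b * int y" "int z \<le> c * int z"
      using assms by (simp_all add: mult_le_cancel_right1)
    moreover have "a * int x \<ge> 0" "b * int y \<ge> 0" "c * int z \<ge> 0"
      using assms by simp_all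
    ultimately have "int x \<le> n" "int y \<le> n" "int z \<le> n" by linarith+
    then show "t \<in> {..nat n} \<times> {..nat n} \<times> {..nat n}"
      using t by auto
  qed
qed simp

lemma p_frobenius_eqI:
  assumes "num_reps G as \<le> p" and "\<And>n. n > G \<Longrightarrow> num_reps n as > p"
  shows "p_frobenius p as = G"
  unfolding p_frobenius_def
proof (rule Greatest_equality)
  show "num_reps G as \<le> p" by (fact assms(1))
  show "n \<le> G" if "num_reps n as \<le> p" for n
    using assms(2)[of n] that by (meson leD not_le_imp_less)
qed

lemma p_frobenius1_eqI:
  fixes a b c G :: int
  assumes pos: "a > 0" "b > 0" "c > 0"
    and unique: "\<And>u. u \<in> reps3 a b c G \<Longrightarrow> u = w"
    and two: "\<And>n. n > G \<Longrightarrow> \<exists>u v. u \<in> reps3 a b c n \<and> v \<in> reps3 a b c n \<and> u \<noteq> v"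
  shows "p_frobenius 1 [nat a, nat b, nat c] = G"
proof (rule p_frobenius_eqI)
  have "card (reps3 a b c G) \<le> card {w}"
    using unique by (intro card_mono) auto
  then show "num_reps G [nat a, nat b, nat c] \<le> 1"
    using pos by (simp add: num_reps_eq_card_reps3)
next
  fix n assume "n > G"
  then obtain u v where "u \<in> reps3 a b c n" "v \<in> reps3 a b c n" "u \<noteq> v"
    using two by blast
  then have "card {u, v} \<le> card (reps3 a b c n)"
    using finite_reps3[OF pos] by (intro card_mono) auto
  then show "num_reps n [nat a, nat b, nat c] > 1"
    using pos \<open>u \<noteq> v\<close> by (simp add: num_reps_eq_card_reps3)
qed

section \<open>Two representations above a bound\<close>

definition bounded_pairs :: "int \<Rightarrow> int \<Rightarrow> int \<Rightarrow> int \<Rightarrow> int \<Rightarrow> (int \<times> int) set" where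
  "bounded_pairs a b c B s =
     {(y, z). 0 \<le> y \<and> 0 \<le> z \<and> a dvd b * y + c * z - s \<and> b * y + c * z \<le> B}"

lemma reps3_of_pair:
  fixes a b c n y z :: int
  assumes "a > 0" "0 \<le> y" "0 \<le> z" "a dvd b * y + c * z - n" "b * y + c * z < n + a"
  shows "(nat ((n - b * y - c * z) div a), nat y, nat z) \<in> reps3 a b c n"
proof -
  obtain k where k: "b * y + c * z - n = a * k"
    using assms(4) by (elim dvdE)
  define m where "m = -k"
  have m: "n - b * y - c * z = a * m"
    using k by (simp add: m_def algebra_simps)
  then have "a * -1 < a * m" using assms(5) by simp
  then have "m \<ge> 0" using \<open>a > 0\<close> by (simp only: mult_less_cancel_left_pos)
  moreover have "(n - b * y - c * z) div a = m" using m \<open>a > 0\<close> by simp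
  ultimately show ?thesis
    using m assms(2,3) by (simp add: reps3_def algebra_simps)
qed

lemma two_reps3_above:
  fixes a b c G n :: int
  assumes "a > 0" "coprime b a"
    and pairs: "\<And>t. 0 \<le> t \<Longrightarrow> t < a \<Longrightarrow> \<exists>p q. p \<noteq> q \<and>
                  p \<in> bounded_pairs a b c (G + a) (b * t) \<and> q \<in> bounded_pairs a b c (G + a) (b * t)"
    and "G < n"
  shows "\<exists>u v. u \<in> reps3 a b c n \<and> v \<in> reps3 a b c n \<and> u \<noteq> v"
proof -
  obtain w where w: "[b * w = 1] (mod a)"
    using cong_solve_coprime_int[OF \<open>coprime b a\<close>] by blast
  define t where "t = (w * n) mod a"
  have t: "0 \<le> t" "t < a" using \<open>a > 0\<close> by (simp_all add: t_def)
  have "[b * t = b * (w * n)] (mod a)"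
    unfolding t_def by (simp add: cong_def mod_mult_right_eq)
  also have "[b * (w * n) = n] (mod a)"
    using cong_mult[OF w cong_refl[of n]] by (simp add: mult.assoc)
  finally have bt: "a dvd b * t - n" by (simp add: cong_iff_dvd_diff)
  define rep where "rep y z = (nat ((n - b * y - c * z) div a), nat y, nat z)" for y z
  have lift: "rep y z \<in> reps3 a b c n" if "(y, z) \<in> bounded_pairs a b c (G + a) (b * t)" for y z
  proof -
    have yz: "0 \<le> y" "0 \<le> z" "a dvd b * y + c * z - b * t" "b * y + c * z \<le> G + a"
      using that by (simp_all add: bounded_pairs_def)
    have "a dvd b * y + c * z - n"
      using dvd_add[OF yz(3) bt] by (simp add: algebra_simps)
    then show ?thesis
      unfolding rep_def using reps3_of_pair[OF \<open>a > 0\<close> yz(1,2)] yz(4) \<open>G < n\<close> by simp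
  qed
  obtain y1 z1 y2 z2 where "(y1, z1) \<noteq> (y2, z2)"
    and pq: "(y1, z1) \<in> bounded_pairs a b c (G + a) (b * t)"
      "(y2, z2) \<in> bounded_pairs a b c (G + a) (b * t)"
    using pairs[OF t] by auto
  moreover have "rep y1 z1 \<noteq> rep y2 z2"
    using \<open>(y1, z1) \<noteq> (y2, z2)\<close> pq by (simp add: rep_def bounded_pairs_def eq_nat_nat_iff)
  ultimately show ?thesis
    using lift by blast
qed

section \<open>Families of third generators\<close>

lemma coprime_dvd_of_mult_eq:
  fixes a b u v :: int
  assumes "coprime b a" "a * u = b * v"
  shows "a dvd v"
proof -
  have "a dvd b * v" using assms(2) by (metis dvd_triv_left)
  then show ?thesis using assms(1) by (simp add: coprime_commute coprime_dvd_mult_right_iff)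
qed

lemma reps3_large_third_unique:
  fixes a b c :: int
  assumes a: "a \<ge> 2" and ba: "b > a" and cop: "coprime b a"
    and c: "c > (2 * a - 1) * b - a"
    and rep: "(x, y, z) \<in> reps3 a b c ((2 * a - 1) * b - a)"
  shows "(x, y, z) = (nat (b - 1), nat (a - 1), 0)"
proof -
  have eq: "a * int x + b * int y + c * int z = (2 * a - 1) * b - a"
    using rep by (simp add: reps3_def)
  have nonneg: "a * int x \<ge> 0" "b * int y \<ge> 0" using a ba by simp_all
  have "c > 0" using c a ba by (smt (verit) mult_le_cancel_right1)
  have z: "z = 0"
  proof (rule ccontr)
    assume "z \<noteq> 0"
    then have "c * int z \<ge> c" using \<open>c > 0\<close> by simp
    then show False using eq nonneg c by linarith
  qed
  then have xy: "a * (int x + 1) = b * (2 * a - 1 - int y)"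
    using eq by (simp add: algebra_simps)
  then obtain m where m: "2 * a - 1 - int y = a * m"
    using coprime_dvd_of_mult_eq[OF cop] by (blast elim: dvdE)
  have "a * (int x + 1) = a * (b * m)" using xy unfolding m by (simp add: algebra_simps)
  then have xm: "int x + 1 = b * m" using a by simp
  then have "0 < b * m" by linarith
  then have "0 < m" using ba a by (simp add: zero_less_mult_iff)
  moreover have "a * m < a * 2" using m a by linarith
  then have "m < 2" using a by (simp add: mult_less_cancel_left_pos)
  ultimately have "m = 1" by simp
  then show ?thesis using z m xm by auto
qed

lemma p_frobenius1_large_third:
  fixes a b c :: int
  assumes a: "a \<ge> 2" and ba: "b > a" and cop: "coprime b a"
    and c: "c > (2 * a - 1) * b - a"
  shows "p_frobenius 1 [nat a, nat b, nat c] = (2 * a - 1) * b - a"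
proof (rule p_frobenius1_eqI)
  show "a > 0" "b > 0" using a ba by simp_all
  show "c > 0" using c a ba by (smt (verit) mult_le_cancel_right1)
  show "u = (nat (b - 1), nat (a - 1), 0)" if "u \<in> reps3 a b c ((2 * a - 1) * b - a)" for u
    using that reps3_large_third_unique[OF a ba cop c] by (cases u) blast
  fix n assume "(2 * a - 1) * b - a < n"
  then show "\<exists>u v. u \<in> reps3 a b c n \<and> v \<in> reps3 a b c n \<and> u \<noteq> v"
  proof (rule two_reps3_above[rotated 3])
    show "a > 0" "coprime b a" using a cop by simp_all
    fix t assume t: "0 \<le> t" "t < a"
    have "b * t \<le> b * (t + a)" "b * (t + a) \<le> b * (2 * a - 1)"
      using t ba a by (intro mult_left_mono; simp)+
    then have "b * t \<le> (2 * a - 1) * b" "b * (t + a) \<le> (2 * a - 1) * b"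
      by (simp_all add: mult.commute)
    moreover have "b * (t + a) - b * t = a * b" by (simp add: algebra_simps)
    ultimately have "(t, 0) \<in> bounded_pairs a b c ((2 * a - 1) * b - a + a) (b * t)"
      "(t + a, 0) \<in> bounded_pairs a b c ((2 * a - 1) * b - a + a) (b * t)"
      using t a by (simp_all add: bounded_pairs_def)
    moreover have "(t, 0) \<noteq> (t + a, 0)" using a by simp
    ultimately show "\<exists>p q. p \<noteq> q \<and> p \<in> bounded_pairs a b c ((2 * a - 1) * b - a + a) (b * t)
        \<and> q \<in> bounded_pairs a b c ((2 * a - 1) * b - a + a) (b * t)"
      by blast
  qed
qed

lemma reps3_shifted_product_third_unique:
  fixes a b p :: int
  assumes a: "a \<ge> 2" and ba: "b > a" and cop: "coprime b a" and p: "1 \<le> p" "p < a"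
    and rep: "(x, y, z) \<in> reps3 a b (a * b + p * (b - a)) ((2 * a - 1) * b - p * a - a)"
  shows "(x, y, z) = (nat (b - p - 1), nat (a - 1), 0)"
proof -
  have eq: "a * int x + b * int y + (a * b + p * (b - a)) * int z = (2 * a - 1) * b - p * a - a"
    using rep by (simp add: reps3_def)
  have xyz: "a * (int x + (b - p) * int z + p + 1) = b * (2 * a - 1 - int y - p * int z)"
    using eq by (simp add: algebra_simps)
  then obtain m where m: "2 * a - 1 - int y - p * int z = a * m"
    using coprime_dvd_of_mult_eq[OF cop] by (blast elim: dvdE)
  have "a * (int x + (b - p) * int z + p + 1) = a * (b * m)"
    using xyz unfolding m by (simp add: algebra_simps)
  then have xm: "int x + (b - p) * int z + p + 1 = b * m" using a by simp
  have "(b - p) * int z \<ge> 0" using ba p by simp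
  then have "0 < b * m" using xm p by linarith
  then have "0 < m" using ba a by (simp add: zero_less_mult_iff)
  moreover have "p * int z \<ge> 0" using p by simp
  then have "a * m < a * 2" using m a by linarith
  then have "m < 2" using a by (simp add: mult_less_cancel_left_pos)
  ultimately have "m = 1" by simp
  then have y: "int y + p * int z = a - 1" and x: "int x + (b - p) * int z + p + 1 = b"
    using m xm by simp_all
  have z: "z = 0"
  proof (rule ccontr)
    assume "z \<noteq> 0"
    then have "(b - p) * int z \<ge> b - p" using ba p by simp
    then show False using x by simp
  qed
  then show ?thesis using x y by auto
qed

lemma p_frobenius1_shifted_product_third:
  fixes a b p :: int
  assumes a: "a \<ge> 2" and ba: "b > a" and cop: "coprime b a" and p: "1 \<le> p" "p < a"
    and pab: "p * a \<le> (a - p) * b"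
  shows "p_frobenius 1 [nat a, nat b, nat (a * b + p * (b - a))] = (2 * a - 1) * b - p * a - a"
proof (rule p_frobenius1_eqI)
  let ?c = "a * b + p * (b - a)" and ?G = "(2 * a - 1) * b - p * a - a"
  show "a > 0" "b > 0" using a ba by simp_all
  have "0 < a * b" "0 \<le> p * (b - a)" using a ba p by simp_all
  then show "?c > 0" by linarith
  show "u = (nat (b - p - 1), nat (a - 1), 0)" if "u \<in> reps3 a b ?c ?G" for u
    using that reps3_shifted_product_third_unique[OF a ba cop p] by (cases u) blast
  fix n assume "?G < n"
  then show "\<exists>u v. u \<in> reps3 a b ?c n \<and> v \<in> reps3 a b ?c n \<and> u \<noteq> v"
  proof (rule two_reps3_above[rotated 3])
    show "a > 0" "coprime b a" using a cop by simp_all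
    fix t assume t: "0 \<le> t" "t < a"
    have "b * t \<le> b * (a - 1)" using t ba a by (intro mult_left_mono) auto
    moreover have "0 \<le> b * p" using p ba a by simp
    ultimately have "b * t \<le> ?G + a" using pab by (simp add: algebra_simps)
    then have t0: "(t, 0) \<in> bounded_pairs a b ?c (?G + a) (b * t)"
      using t by (simp add: bounded_pairs_def)
    show "\<exists>q r. q \<noteq> r \<and> q \<in> bounded_pairs a b ?c (?G + a) (b * t)
        \<and> r \<in> bounded_pairs a b ?c (?G + a) (b * t)"
    proof (cases "p \<le> t")
      case True
      have "b * (t - p) + ?c - b * t = a * (b - p)" by (simp add: algebra_simps)
      moreover have "b * (t - p) + ?c \<le> ?G + a"
        using \<open>b * t \<le> b * (a - 1)\<close> pab by (simp add: algebra_simps)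
      ultimately have "(t - p, 1) \<in> bounded_pairs a b ?c (?G + a) (b * t)"
        using True by (simp add: bounded_pairs_def)
      then show ?thesis using t0 by (intro exI[of _ "(t, 0)"] exI[of _ "(t - p, 1)"]) (simp add: p)
    next
      case False
      have "b * (t + a) \<le> b * (p - 1 + a)" using t False ba a by (intro mult_left_mono) auto
      then have "(t + a, 0) \<in> bounded_pairs a b ?c (?G + a) (b * t)"
        using t pab by (simp add: bounded_pairs_def algebra_simps)
      then show ?thesis using t0 a by (intro exI[of _ "(t, 0)"] exI[of _ "(t + a, 0)"]) simp
    qed
  qed
qed

lemma reps3_multiple_third_unique:
  fixes a b h :: int
  assumes a: "a \<ge> 2" and ba: "b > a" and cop: "coprime b a" and h: "1 \<le> h" "h < b"
    and rep: "(x, y, z) \<in> reps3 a b (a * h) ((a - 1) * b + a * h - a)"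
  shows "(x, y, z) = (nat (h - 1), nat (a - 1), 0)"
proof -
  have eq: "a * int x + b * int y + a * h * int z = (a - 1) * b + a * h - a"
    using rep by (simp add: reps3_def)
  have xyz: "a * (int x + h * int z - h + 1) = b * (a - 1 - int y)"
    using eq by (simp add: algebra_simps)
  then obtain m where m: "a - 1 - int y = a * m"
    using coprime_dvd_of_mult_eq[OF cop] by (blast elim: dvdE)
  have "a * m < a * 1" using m a by linarith
  then have "m < 1" using a by (simp add: mult_less_cancel_left_pos)
  have "m = 0"
  proof (rule ccontr)
    assume "m \<noteq> 0"
    then have "a * m \<le> a * -1" using \<open>m < 1\<close> a by (intro mult_left_mono) auto
    then have "int y \<ge> 2 * a - 1" using m by linarith
    then have "b * int y \<ge> b * (2 * a - 1)" using ba a by (intro mult_left_mono) auto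
    moreover have "a * h < a * b" "a * int x \<ge> 0" "a * h * int z \<ge> 0" using h a by simp_all
    moreover have "b * (2 * a - 1) = 2 * (a * b) - b" "(a - 1) * b = a * b - b"
      by (simp_all add: algebra_simps)
    ultimately show False using eq a by (smt (verit))
  qed
  then have y: "int y = a - 1" and x: "int x + h * int z = h - 1"
    using m xyz a by simp_all
  have z: "z = 0"
  proof (rule ccontr)
    assume "z \<noteq> 0"
    then have "h * int z \<ge> h" using h by simp
    then show False using x by simp
  qed
  then show ?thesis using x y by auto
qed

lemma p_frobenius1_multiple_third:
  fixes a b h :: int
  assumes a: "a \<ge> 2" and ba: "b > a" and cop: "coprime b a" and h: "1 \<le> h" "h < b"
  shows "p_frobenius 1 [nat a, nat b, nat (a * h)] = (a - 1) * b + a * h - a"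
proof (rule p_frobenius1_eqI)
  let ?G = "(a - 1) * b + a * h - a"
  show "a > 0" "b > 0" "a * h > 0" using a ba h by simp_all
  show "u = (nat (h - 1), nat (a - 1), 0)" if "u \<in> reps3 a b (a * h) ?G" for u
    using that reps3_multiple_third_unique[OF a ba cop h] by (cases u) blast
  fix n assume "?G < n"
  then show "\<exists>u v. u \<in> reps3 a b (a * h) n \<and> v \<in> reps3 a b (a * h) n \<and> u \<noteq> v"
  proof (rule two_reps3_above[rotated 3])
    show "a > 0" "coprime b a" using a cop by simp_all
    fix t assume t: "0 \<le> t" "t < a"
    have "b * t \<le> b * (a - 1)" using t ba a by (intro mult_left_mono) auto
    moreover have "(a - 1) * b = b * (a - 1)" "0 \<le> a * h" using a h by simp_all
    ultimately have "b * t \<le> ?G + a" "b * t + a * h \<le> ?G + a" by linarith+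
    then have "(t, 0) \<in> bounded_pairs a b (a * h) (?G + a) (b * t)"
      "(t, 1) \<in> bounded_pairs a b (a * h) (?G + a) (b * t)"
      using t by (simp_all add: bounded_pairs_def)
    then show "\<exists>p q. p \<noteq> q \<and> p \<in> bounded_pairs a b (a * h) (?G + a) (b * t)
        \<and> q \<in> bounded_pairs a b (a * h) (?G + a) (b * t)"
      by (intro exI[of _ "(t, 0)"] exI[of _ "(t, 1)"]) simp
  qed
qed

text \<open>Both candidates V1 - a and V2 - a of the general case below have the form L b - K e a - a.\<close>

lemma reps3_combination_third_unique:
  fixes a b e f K L :: int
  assumes a: "a > 0" and e: "e \<ge> 1" and f: "f \<ge> 1" and cop: "coprime b a"
    and c_gt: "f * b - e * a > e * f"
    and L: "L - f \<le> f * K" "L < f * (K + 1)" "L - a < f" "L < 2 * a"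
    and rep: "(x, y, z) \<in> reps3 a b (f * b - e * a) (L * b - K * e * a - a)"
  shows "(x, y, z) = (nat (b - K * e - 1), nat (L - a), 0)"
proof -
  have "a * int x + b * int y + (f * b - e * a) * int z = L * b - K * e * a - a"
    using rep by (simp add: reps3_def)
  then have xyz: "a * (int x - e * int z + K * e + 1) = b * (L - (int y + f * int z))"
    by (simp add: algebra_simps)
  then obtain m where m: "L - (int y + f * int z) = a * m"
    using coprime_dvd_of_mult_eq[OF cop] by (blast elim: dvdE)
  have "a * (int x - e * int z + K * e + 1) = a * (b * m)"
    using xyz unfolding m by (simp add: algebra_simps)
  then have xm: "int x - e * int z + K * e + 1 = b * m" using a by simp
  consider "m \<le> -1" | "m = 0" | "m = 1" | "m \<ge> 2" by linarith
  then show ?thesis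
  proof cases
    case 1
    txt \<open>Eliminating z between e z \<ge> K e + 1 - b m and f z \<le> L - a m contradicts c > e f.\<close>
    have "f * (e * int z) \<ge> f * (K * e + 1 - b * m)" using xm f by (intro mult_left_mono) auto
    moreover have "e * (f * int z) \<le> e * (L - a * m)" using m e by (intro mult_left_mono) auto
    moreover have "0 < e * f" using e f by simp
    then have "1 * (f * b - e * a) \<le> (-m) * (f * b - e * a)"
      using 1 c_gt by (intro mult_right_mono) auto
    moreover have "e * (L - f) \<le> e * (f * K)" using L(1) e by (intro mult_left_mono) auto
    ultimately have False using c_gt f by (simp add: algebra_simps)
    then show ?thesis ..
  next
    case 2
    then have "e * int z = int x + K * e + 1" using xm by simp
    moreover have "e * K = K * e" by simp
    ultimately have "e * int z > e * K" by linarith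
    then have "int z \<ge> K + 1" using e by (simp add: mult_less_cancel_left_pos)
    then have "f * int z \<ge> f * (K + 1)" using f by (intro mult_left_mono) auto
    then have False using m 2 L(2) by simp
    then show ?thesis ..
  next
    case 3
    have "z = 0"
    proof (rule ccontr)
      assume "z \<noteq> 0"
      then have "f * int z \<ge> f" using f by simp
      then show False using m 3 L(3) by simp
    qed
    then show ?thesis using m xm 3 by auto
  next
    case 4
    then have "a * m \<ge> a * 2" using a by (intro mult_left_mono) auto
    moreover have "f * int z \<ge> 0" using f by simp
    ultimately have False using m L(4) by linarith
    then show ?thesis ..
  qed
qed

text \<open>
  In part (d), e = F_{k-2} and f = F_k, and V1 - a, V2 - a are the two alternatives of the
  formula.
\<close>

locale third_combination =
  fixes a b c e f r :: int
  assumes a: "a \<ge> 2" and b: "b \<ge> a + e + 1" and cop: "coprime b a" and e: "e \<ge> 1"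
    and ef: "2 * e \<le> f" and fa: "f \<le> a - 1"
    and r: "r = (a - 1) div f" and c: "c = f * b - e * a"
begin

definition V1 :: int where "V1 = (a - 1 + f) * b - (r + 1) * e * a"
definition V2 :: int where "V2 = ((r + 1) * f - 1) * b - r * e * a"

lemma r_bounds: "r * f \<le> a - 1" "a \<le> (r + 1) * f" "1 \<le> r"
proof -
  have f: "f > 0" using e ef by simp
  have "a - 1 = f * r + (a - 1) mod f" using r by simp
  moreover have "0 \<le> (a - 1) mod f" "(a - 1) mod f < f" using f by simp_all
  ultimately show "r * f \<le> a - 1" "a \<le> (r + 1) * f" by (simp_all add: algebra_simps)
  show "1 \<le> r" unfolding r using pos_imp_zdiv_pos_iff[of f "a - 1"] f fa by linarith
qed

lemma c_gt: "e * f < c"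
proof -
  have "f * (a + e + 1) \<le> f * b" using b e ef by (intro mult_left_mono) auto
  moreover have "e * a \<le> f * a" using a ef e by (intro mult_right_mono) auto
  ultimately show ?thesis unfolding c using e ef by (simp add: algebra_simps)
qed

lemma c_ge: "e * a \<le> c"
proof -
  have "2 * e * b \<le> f * b" using ef b a e by (intro mult_right_mono) auto
  moreover have "e * a \<le> e * b" using e b by (intro mult_left_mono) auto
  ultimately show ?thesis unfolding c by (simp add: algebra_simps)
qed

lemma reps3_V1_unique:
  assumes "u \<in> reps3 a b c (V1 - a)"
  shows "u = (nat (b - (r + 1) * e - 1), nat (f - 1), 0)"
proof (cases u)
  case (fields x y z)
  have "(x, y, z) = (nat (b - (r + 1) * e - 1), nat (a - 1 + f - a), 0)"
  proof (rule reps3_combination_third_unique[where K = "r + 1" and L = "a - 1 + f"])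
    show "(x, y, z) \<in> reps3 a b (f * b - e * a) ((a - 1 + f) * b - (r + 1) * e * a - a)"
      using assms fields by (simp add: c V1_def)
    show "f * b - e * a > e * f" using c c_gt by simp
    show "a - 1 + f - f \<le> f * (r + 1)" "a - 1 + f < f * (r + 1 + 1)"
      using r_bounds by (simp_all add: algebra_simps)
  qed (use a e ef fa cop in auto)
  then show ?thesis using fields by simp
qed

lemma reps3_V2_unique:
  assumes "u \<in> reps3 a b c (V2 - a)"
  shows "u = (nat (b - r * e - 1), nat ((r + 1) * f - 1 - a), 0)"
proof (cases u)
  case (fields x y z)
  show ?thesis
    unfolding fields
  proof (rule reps3_combination_third_unique[where K = r and L = "(r + 1) * f - 1"])
    show "(x, y, z) \<in> reps3 a b (f * b - e * a) (((r + 1) * f - 1) * b - r * e * a - a)"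
      using assms fields by (simp add: c V2_def)
    show "f * b - e * a > e * f" using c c_gt by simp
    show "(r + 1) * f - 1 - f \<le> f * r" "(r + 1) * f - 1 < f * (r + 1)"
      "(r + 1) * f - 1 - a < f" "(r + 1) * f - 1 < 2 * a"
      using r_bounds fa by (simp_all add: algebra_simps)
  qed (use a e ef cop in auto)
qed

lemma two_bounded_pairs_positive_quotient:
  assumes t: "0 \<le> t" "t < a" and d: "1 \<le> t div f"
  shows "\<exists>p q. p \<noteq> q \<and> p \<in> bounded_pairs a b c (max V1 V2) (b * t)
           \<and> q \<in> bounded_pairs a b c (max V1 V2) (b * t)"
proof -
  define d where "d = t div f"
  have f: "f > 0" using e ef by simp
  have t_div: "t = f * d + t mod f" "0 \<le> t mod f" "t mod f < f"
    using f by (simp_all add: d_def)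
  have "d \<le> r" unfolding d_def r using t f by (intro zdiv_mono1) auto
  have "0 \<le> e * a" using e a by simp
  have "b * t - e * a * (d - 1) \<le> max V1 V2"
  proof (cases "d = r")
    case True
    have "b * t \<le> b * (a - 1)" using t b e by (intro mult_left_mono) auto
    moreover have "V1 = b * (a - 1) + (c + e * a) - (r + 1) * e * a"
      unfolding V1_def c by (simp add: algebra_simps)
    moreover have "(r + 1) * e * a = e * a * (d - 1) + 2 * (e * a)"
      using True by (simp add: algebra_simps)
    ultimately show ?thesis using c_ge by linarith
  next
    case False
    then have "1 * c \<le> (r - d) * c" using \<open>d \<le> r\<close> c_ge \<open>0 \<le> e * a\<close>
      by (intro mult_right_mono) auto
    moreover have "b * t \<le> b * (f * d + f - 1)" using t_div a b e by (intro mult_left_mono) auto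
    moreover have "V2 - b * (f * d + f - 1) + e * a * (d - 1) = (r - d) * c - e * a"
      unfolding V2_def c by (simp add: algebra_simps)
    ultimately show ?thesis using c_ge by linarith
  qed
  moreover have "e * a * (d - 1) \<le> e * a * d" using \<open>0 \<le> e * a\<close> by (intro mult_left_mono) auto
  moreover have "(t - f * j, j) \<in> bounded_pairs a b c (max V1 V2) (b * t)"
    if "0 \<le> j" "j \<le> d" "b * t - e * a * j \<le> max V1 V2" for j
  proof -
    have "f * j \<le> f * d" using that f by (intro mult_left_mono) auto
    then have "0 \<le> t - f * j" using t_div by linarith
    moreover have "b * (t - f * j) + c * j - b * t = a * -(e * j)"
      unfolding c by (simp add: algebra_simps)
    moreover have "b * (t - f * j) + c * j = b * t - e * a * j"
      unfolding c by (simp add: algebra_simps)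
    ultimately show ?thesis using that t_div by (simp add: bounded_pairs_def)
  qed
  ultimately have "(t - f * d, d) \<in> bounded_pairs a b c (max V1 V2) (b * t)"
    "(t - f * (d - 1), d - 1) \<in> bounded_pairs a b c (max V1 V2) (b * t)"
    using d unfolding d_def by simp_all
  then show ?thesis by (intro exI[of _ "(t - f * d, d)"] exI[of _ "(t - f * (d - 1), d - 1)"]) simp
qed

lemma two_bounded_pairs_zero_quotient:
  assumes t: "0 \<le> t" "t < f"
  shows "\<exists>p q. p \<noteq> q \<and> p \<in> bounded_pairs a b c (max V1 V2) (b * t)
           \<and> q \<in> bounded_pairs a b c (max V1 V2) (b * t)"
proof -
  have "0 \<le> e * a" using e a by simp
  then have "0 \<le> r * c" using r_bounds c_ge by simp
  moreover have "b * t \<le> b * (f - 1)" using t a b e by (intro mult_left_mono) auto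
  moreover have "V2 = b * (f - 1) + r * c" unfolding V2_def c by (simp add: algebra_simps)
  ultimately have "b * t \<le> max V1 V2" by linarith
  then have first: "(t, 0) \<in> bounded_pairs a b c (max V1 V2) (b * t)"
    using t by (simp add: bounded_pairs_def)
  define z where "z = (if (r + 1) * f \<le> t + a then r + 1 else r)"
  have "0 \<le> t + a - f * z" "b * (t + a) - e * a * z \<le> max V1 V2"
  proof (atomize (full), cases "(r + 1) * f \<le> t + a")
    case True
    have "b * (t + a) \<le> b * (a - 1 + f)" using t a b e by (intro mult_left_mono) auto
    then show "0 \<le> t + a - f * z \<and> b * (t + a) - e * a * z \<le> max V1 V2"
      using True unfolding z_def V1_def by (simp add: algebra_simps)
  next
    case False
    then have "b * (t + a) \<le> b * ((r + 1) * f - 1)" using a b e by (intro mult_left_mono) auto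
    then show "0 \<le> t + a - f * z \<and> b * (t + a) - e * a * z \<le> max V1 V2"
      using False r_bounds t unfolding z_def V2_def by (simp add: algebra_simps)
  qed
  moreover have "b * (t + a - f * z) + c * z = b * (t + a) - e * a * z"
    "b * (t + a - f * z) + c * z - b * t = a * (b - e * z)"
    unfolding c by (simp_all add: algebra_simps)
  moreover have "1 \<le> z" unfolding z_def using r_bounds by simp
  ultimately have "(t + a - f * z, z) \<in> bounded_pairs a b c (max V1 V2) (b * t)"
    by (simp add: bounded_pairs_def)
  then show ?thesis using first \<open>1 \<le> z\<close>
    by (intro exI[of _ "(t, 0)"] exI[of _ "(t + a - f * z, z)"]) simp
qed

theorem p_frobenius1_eq:
  "p_frobenius 1 [nat a, nat b, nat c] = max V1 V2 - a"
proof (rule p_frobenius1_eqI)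
  show "a > 0" "b > 0" using a b e by simp_all
  show "c > 0" using c_gt e ef by (smt (verit) mult_pos_pos)
  show "u = (if V2 \<le> V1 then (nat (b - (r + 1) * e - 1), nat (f - 1), 0)
             else (nat (b - r * e - 1), nat ((r + 1) * f - 1 - a), 0))"
    if "u \<in> reps3 a b c (max V1 V2 - a)" for u
    using that by (cases "V2 \<le> V1") (simp_all add: max_def reps3_V1_unique reps3_V2_unique)
  fix n assume "max V1 V2 - a < n"
  then show "\<exists>u v. u \<in> reps3 a b c n \<and> v \<in> reps3 a b c n \<and> u \<noteq> v"
  proof (rule two_reps3_above[rotated 3])
    show "a > 0" "coprime b a" using a cop by simp_all
    fix t assume t: "0 \<le> t" "t < a"
    show "\<exists>p q. p \<noteq> q \<and> p \<in> bounded_pairs a b c (max V1 V2 - a + a) (b * t)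
        \<and> q \<in> bounded_pairs a b c (max V1 V2 - a + a) (b * t)"
    proof (cases "1 \<le> t div f")
      case True
      then show ?thesis using two_bounded_pairs_positive_quotient[OF t] by simp
    next
      case False
      then have "t < f" using pos_imp_zdiv_pos_iff[of f t] e ef by linarith
      then show ?thesis using two_bounded_pairs_zero_quotient t(1) by simp
    qed
  qed
qed

end

section \<open>Fibonacci triples\<close>

lemma fib_add_shift:
  assumes "k \<ge> 2"
  shows "int (fib (i + k)) = int (fib k) * int (fib (i + 2)) - int (fib (k - 2)) * int (fib i)"
proof -
  obtain l where k: "k = l + 2" using assms by (metis add.commute le_Suc_ex)
  have "fib (i + k) = fib (l + 2) * fib (i + 1) + fib (l + 1) * fib i"
    using fib_add[of i "l + 1"] unfolding k by (simp add: algebra_simps)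
  moreover have "fib (i + 2) = fib (i + 1) + fib i" "fib (l + 2) = fib (l + 1) + fib l"
    by (simp_all add: fib_plus_2)
  ultimately show ?thesis unfolding k by (simp add: algebra_simps)
qed

lemma coprime_fib_add2: "coprime (int (fib (i + 2))) (int (fib i))"
proof -
  have "gcd (fib i) (fib (2 + i)) = 1" using gcd_fib_add[of i 2] by simp
  then show ?thesis by (simp add: coprime_iff_gcd_eq_1 gcd.commute add.commute)
qed

lemma fib_ge3_cases:
  assumes "i \<ge> 3"
  obtains u v where "int (fib (i - 2)) = u" "int (fib (i - 1)) = v" "int (fib i) = u + v"
    "int (fib (i + 1)) = u + 2 * v" "int (fib (i + 2)) = 2 * u + 3 * v"
    "1 \<le> u" "u \<le> v" "v \<le> 2 * u"
proof -
  obtain m where i: "i = m + 3" using assms by (metis add.commute le_Suc_ex)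
  have "fib m \<le> fib (m + 1)" "fib (m + 1) \<le> fib (m + 2)" "1 \<le> fib (m + 1)"
    by (simp_all add: fib_mono Suc_le_eq fib_neq_0_nat)
  then show ?thesis
    by (intro that[of "int (fib (m + 1))" "int (fib (m + 2))"]) (simp_all add: i eval_nat_numeral)
qed

lemma p_frobenius1_fib_far:
  assumes "i \<ge> 3" "k \<ge> i + 2"
  shows "p_frobenius 1 [fib i, fib (i + 2), fib (i + k)]
    = (2 * int (fib i) - 1) * int (fib (i + 2)) - int (fib i)"
proof -
  obtain u v where uv: "int (fib i) = u + v" "int (fib (i + 2)) = 2 * u + 3 * v"
    "1 \<le> u" "u \<le> v" "v \<le> 2 * u"
    using fib_ge3_cases[OF assms(1)] by metis
  have "fib (i + (i + 2)) \<le> fib (i + k)" by (rule fib_mono) (use assms(2) in simp)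
  then have "int (fib (i + 2)) * int (fib (i + 2)) - int (fib i) * int (fib i) \<le> int (fib (i + k))"
    using fib_add_shift[of "i + 2" i] by simp
  moreover have "u * u \<le> v * v" "0 \<le> v * v" using uv by (intro mult_mono, auto)
  moreover have "(2 * u + 3 * v) * (2 * u + 3 * v) - (u + v) * (u + v)
      - ((2 * (u + v) - 1) * (2 * u + 3 * v) - (u + v)) = 2 * (v * v) - u * u + 3 * u + 4 * v"
    by (simp add: algebra_simps)
  ultimately have "int (fib (i + k)) > (2 * int (fib i) - 1) * int (fib (i + 2)) - int (fib i)"
    using uv unfolding uv by linarith
  moreover have "int (fib i) \<ge> 2" "int (fib (i + 2)) > int (fib i)" using uv by simp_all
  ultimately have "p_frobenius 1 [nat (int (fib i)), nat (int (fib (i + 2))), nat (int (fib (i + k)))]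
    = (2 * int (fib i) - 1) * int (fib (i + 2)) - int (fib i)"
    using coprime_fib_add2 by (intro p_frobenius1_large_third)
  then show ?thesis by (simp only: nat_int)
qed

lemma p_frobenius1_fib_2i1:
  assumes "i \<ge> 3"
  shows "p_frobenius 1 [fib i, fib (i + 2), fib (2 * i + 1)]
    = (int (fib (i - 2)) - 1) * int (fib (i + 2)) + int (fib (2 * i + 1)) - int (fib i)"
proof -
  obtain u v where uv: "int (fib (i - 2)) = u" "int (fib (i - 1)) = v" "int (fib i) = u + v"
    "int (fib (i + 1)) = u + 2 * v" "int (fib (i + 2)) = 2 * u + 3 * v"
    "1 \<le> u" "u \<le> v" "v \<le> 2 * u"
    using fib_ge3_cases[OF assms] by metis
  let ?a = "int (fib i)" and ?b = "int (fib (i + 2))" and ?p = "int (fib (i - 1))"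
  have "int (fib (2 * i + 1)) = int (fib (i + 1)) * ?b - ?p * ?a"
    using fib_add_shift[of "i + 1" i] assms by (simp add: mult_2)
  then have c: "int (fib (2 * i + 1)) = ?a * ?b + ?p * (?b - ?a)"
    unfolding uv by (simp add: algebra_simps)
  have "v * v \<le> v * (2 * u)" "0 \<le> u * u" using uv by (intro mult_left_mono, auto)
  moreover have "v * (u + v) = u * v + v * v" "v * (2 * u) = 2 * (u * v)"
    "(u + v - v) * (2 * u + 3 * v) = 2 * (u * u) + 3 * (u * v)"
    by (simp_all add: algebra_simps)
  ultimately have "v * (u + v) \<le> (u + v - v) * (2 * u + 3 * v)" by (smt (verit))
  then have "?p * ?a \<le> (?a - ?p) * ?b" unfolding uv .
  moreover have "?a \<ge> 2" "?b > ?a" "1 \<le> ?p" "?p < ?a" using uv by simp_all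
  ultimately have "p_frobenius 1 [nat ?a, nat ?b, nat (?a * ?b + ?p * (?b - ?a))]
      = (2 * ?a - 1) * ?b - ?p * ?a - ?a"
    using coprime_fib_add2 by (intro p_frobenius1_shifted_product_third)
  then have "p_frobenius 1 [fib i, fib (i + 2), fib (2 * i + 1)]
      = (2 * ?a - 1) * ?b - ?p * ?a - ?a"
    unfolding c[symmetric] by (simp only: nat_int)
  also have "\<dots> = (int (fib (i - 2)) - 1) * ?b + int (fib (2 * i + 1)) - ?a"
    unfolding c uv by (simp add: algebra_simps)
  finally show ?thesis .
qed

lemma p_frobenius1_fib_2i:
  assumes "i \<ge> 3"
  shows "p_frobenius 1 [fib i, fib (i + 2), fib (2 * i)]
    = (int (fib i) - 1) * int (fib (i + 2)) + int (fib (2 * i)) - int (fib i)"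
proof -
  obtain u v where uv: "int (fib (i - 2)) = u" "int (fib i) = u + v"
    "int (fib (i + 2)) = 2 * u + 3 * v" "1 \<le> u" "u \<le> v"
    using fib_ge3_cases[OF assms] by metis
  let ?a = "int (fib i)" and ?b = "int (fib (i + 2))" and ?h = "int (fib (i + 2)) - int (fib (i - 2))"
  have "int (fib (2 * i)) = ?a * ?b - int (fib (i - 2)) * ?a"
    using fib_add_shift[of i i] assms by (simp add: mult_2)
  then have c: "int (fib (2 * i)) = ?a * ?h" by (simp add: algebra_simps)
  have "?a \<ge> 2" "?b > ?a" "1 \<le> ?h" "?h < ?b" using uv by simp_all
  then have "p_frobenius 1 [nat ?a, nat ?b, nat (?a * ?h)] = (?a - 1) * ?b + ?a * ?h - ?a"
    using coprime_fib_add2 by (intro p_frobenius1_multiple_third)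
  then show ?thesis unfolding c[symmetric] by (simp only: nat_int)
qed

lemma p_frobenius1_fib_near:
  fixes r :: int
  assumes i: "i \<ge> 3" and k: "k \<ge> 3"
    and r: "r = (int (fib i) - 1) div int (fib k)" and r1: "1 \<le> r"
  defines "a \<equiv> int (fib i)" and "b \<equiv> int (fib (i + 2))" and "c \<equiv> int (fib (i + k))"
    and "e \<equiv> int (fib (k - 2))" and "f \<equiv> int (fib k)"
  shows "p_frobenius 1 [fib i, fib (i + 2), fib (i + k)] =
    (if (a - r * f) * b \<ge> e * a
     then (a - r * f - 1) * b + (r + 1) * c - a
     else (f - 1) * b + r * c - a)"
proof -
  obtain u v where uv: "a = u + v" "int (fib (i + 1)) = u + 2 * v" "b = 2 * u + 3 * v" "1 \<le> u" "u \<le> v"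
    using fib_ge3_cases[OF i] unfolding a_def b_def by metis
  obtain l where l: "k = l + 3" using k by (metis add.commute le_Suc_ex)
  have "fib (l + 1) \<le> fib (l + 2)" "fib (l + 3) = fib (l + 2) + fib (l + 1)" "1 \<le> fib (l + 1)"
    by (simp_all add: fib_mono eval_nat_numeral Suc_le_eq fib_neq_0_nat)
  then have e: "1 \<le> e" and ef: "2 * e \<le> f" unfolding e_def f_def l by simp_all
  have fa: "f \<le> a - 1"
  proof (rule ccontr)
    assume "\<not> f \<le> a - 1"
    then have "(a - 1) div f = 0" using uv by (intro div_pos_pos_trivial) auto
    then show False using r r1 unfolding a_def f_def by simp
  qed
  interpret third_combination a b c e f r
  proof
    show "a \<ge> 2" "b \<ge> a + e + 1" using uv e ef fa by simp_all
    show "coprime b a" unfolding a_def b_def by (rule coprime_fib_add2)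
    show "c = f * b - e * a" unfolding a_def b_def c_def e_def f_def using fib_add_shift k by simp
  qed (use e ef fa r in \<open>simp_all add: a_def f_def\<close>)
  have "p_frobenius 1 [fib i, fib (i + 2), fib (i + k)] = max V1 V2 - a"
    using p_frobenius1_eq unfolding a_def b_def c_def nat_int .
  also have "\<dots> = (if (a - r * f) * b \<ge> e * a
         then (a - r * f - 1) * b + (r + 1) * c - a
         else (f - 1) * b + r * c - a)"
    unfolding V1_def V2_def c by (simp add: algebra_simps max_def)
  finally show ?thesis .
qed

theorem theorem2:
  fixes i k :: nat
  assumes "i \<ge> 3" and "k \<ge> 3"
  defines "F \<equiv> \<lambda>j. int (fib j)"
  shows
    "(k \<ge> i + 2 \<longrightarrow>
       p_frobenius 1 [fib i, fib (i+2), fib (i+k)] = (2 * F i - 1) * F (i+2) - F i)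
   \<and> p_frobenius 1 [fib i, fib (i+2), fib (2*i+1)]
       = (F (i-2) - 1) * F (i+2) + F (2*i+1) - F i
   \<and> p_frobenius 1 [fib i, fib (i+2), fib (2*i)]
       = (F i - 1) * F (i+2) + F (2*i) - F i
   \<and> (\<forall>r::int. r = (F i - 1) div F k \<longrightarrow> r \<ge> 1 \<longrightarrow>
       p_frobenius 1 [fib i, fib (i+2), fib (i+k)] =
         (if (F i - r * F k) * F (i+2) \<ge> F (k-2) * F i
          then (F i - r * F k - 1) * F (i+2) + (r+1) * F (i+k) - F i
          else (F k - 1) * F (i+2) + r * F (i+k) - F i))"
  unfolding F_def
  using p_frobenius1_fib_far[OF assms(1)] p_frobenius1_fib_2i1[OF assms(1)]
    p_frobenius1_fib_2i[OF assms(1)] p_frobenius1_fib_near[OF assms(1,2)]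
  by blast

end
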